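(* Let $(L,\nu,\tau)$ be a Šerstnev random normed space whose triangle function satisfies $\tau(F,G)(x)\ge\sup_{t\in[0,1]}\min\{F(tx),G((1-t)x)\}$ for all $x\ge0$ and $F,G\in D^+$. If $A\subset L$ is convex and $\epsilon>0$, then $A_\epsilon=\{q\in L:\exists p\in A,\ \nu(p-q)(\epsilon)>1-\epsilon\}$ is convex.
   Context: $\Delta^+$ is the set of functions $F:[-\infty,\infty]\to[0,1]$ that are nondecreasing, left-continuous on $\mathbb R$, with $F(-\infty)=0$, $F(\infty)=1$, $F(0)=0$; ordered pointwise; $D^+=\{F\in\Delta^+:\lim_{x\to\infty}F(x)=1\}$; $\epsilon_0(x)=0$ for $x\le0$, $=1$ for $x>0$. A triangle function is $\tau:\Delta^+\times\Delta^+\to\Delta^+$ commutative, associative, nondecreasing in each argument, with $\tau(F,\epsilon_0)=F$, continuous for weak convergence. A Šerstnev random normed space $(L,\nu,\tau)$: $L$ a real vector space, $\tau$ a continuous triangle function with $\tau(D^+\times D^+)\subset D^+$, $\nu:L\to D^+$ with $\nu(p)=\epsilon_0\iff p=0$; $\nu(ap)(x)=\nu(p)(x/|a|)$ for $x\ge0$, $a\ne0$; $\nu(p+q)\ge\tau(\nu(p),\nu(q))$. *)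

theory Defs
  imports "HOL-Analysis.Analysis"
begin

text \<open>An element F of Delta-plus is determined by its
restriction to the reals, since F(-infinity) = 0 and F(infinity) = 1 are fixed; we therefore
represent distribution functions as functions real to real (values at the infinities implicit).\<close>

definition delta_plus :: "(real \<Rightarrow> real) set" where
  "delta_plus = {F. mono F \<and> (\<forall>x. continuous (at_left x) F)
                    \<and> (\<forall>x. 0 \<le> F x \<and> F x \<le> 1) \<and> F 0 = 0}"

definition D_plus :: "(real \<Rightarrow> real) set" where
  "D_plus = {F. F \<in> delta_plus \<and> (F \<longlongrightarrow> 1) at_top}"

definition eps0 :: "real \<Rightarrow> real" where
  "eps0 x = (if x \<le> 0 then 0 else 1)"

definition weak_conv :: "(nat \<Rightarrow> real \<Rightarrow> real) \<Rightarrow> (real \<Rightarrow> real) \<Rightarrow> bool" where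
  "weak_conv Fs F \<longleftrightarrow> (\<forall>x. isCont F x \<longrightarrow> (\<lambda>n. Fs n x) \<longlonglongrightarrow> F x)"

definition triangle_function ::
  "((real \<Rightarrow> real) \<Rightarrow> (real \<Rightarrow> real) \<Rightarrow> (real \<Rightarrow> real)) \<Rightarrow> bool" where
  "triangle_function \<tau> \<longleftrightarrow>
     (\<forall>F\<in>delta_plus. \<forall>G\<in>delta_plus. \<tau> F G \<in> delta_plus)
   \<and> (\<forall>F\<in>delta_plus. \<forall>G\<in>delta_plus. \<tau> F G = \<tau> G F)
   \<and> (\<forall>F\<in>delta_plus. \<forall>G\<in>delta_plus. \<forall>H\<in>delta_plus. \<tau> (\<tau> F G) H = \<tau> F (\<tau> G H))
   \<and> (\<forall>F\<in>delta_plus. \<forall>G\<in>delta_plus. \<forall>H\<in>delta_plus. F \<le> G \<longrightarrow> \<tau> F H \<le> \<tau> G H)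
   \<and> (\<forall>F\<in>delta_plus. \<tau> F eps0 = F)
   \<and> (\<forall>Fs F Gs G. (\<forall>n. Fs n \<in> delta_plus) \<longrightarrow> (\<forall>n. Gs n \<in> delta_plus)
        \<longrightarrow> F \<in> delta_plus \<longrightarrow> G \<in> delta_plus
        \<longrightarrow> weak_conv Fs F \<longrightarrow> weak_conv Gs G
        \<longrightarrow> weak_conv (\<lambda>n. \<tau> (Fs n) (Gs n)) (\<tau> F G))"

definition serstnev_rns ::
  "('a::real_vector \<Rightarrow> real \<Rightarrow> real) \<Rightarrow> ((real \<Rightarrow> real) \<Rightarrow> (real \<Rightarrow> real) \<Rightarrow> (real \<Rightarrow> real)) \<Rightarrow> bool"
  where
  "serstnev_rns \<nu> \<tau> \<longleftrightarrow>
     triangle_function \<tau>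
   \<and> (\<forall>F\<in>D_plus. \<forall>G\<in>D_plus. \<tau> F G \<in> D_plus)
   \<and> (\<forall>p. \<nu> p \<in> D_plus)
   \<and> (\<forall>p. \<nu> p = eps0 \<longleftrightarrow> p = 0)
   \<and> (\<forall>a p x. a \<noteq> 0 \<longrightarrow> x \<ge> 0 \<longrightarrow> \<nu> (a *\<^sub>R p) x = \<nu> p (x / \<bar>a\<bar>))
   \<and> (\<forall>p q. \<tau> (\<nu> p) (\<nu> q) \<le> \<nu> (p + q))"

end

theory Submission
  imports Defs
begin

text \<open>For fixed \<open>x \<ge> 0\<close> the map \<open>p \<mapsto> \<nu> p x\<close> is quasi-concave: by the Serstnev scaling law,
  \<open>\<nu> (u p) (u x) = \<nu> p x\<close>, so evaluating the supremum bound on \<open>\<tau>\<close> at \<open>t = u\<close> gives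
  \<open>\<nu> (u p + v q) x \<ge> min (\<nu> p x) (\<nu> q x)\<close> whenever \<open>u + v = 1\<close>. Hence the superlevel set
  \<open>B = {r. \<nu> r \<epsilon> > 1 - \<epsilon>}\<close> is convex, and \<open>A\<^sub>\<epsilon> = A - B\<close> is a difference of convex sets.\<close>

lemma serstnev_rns_scale_pos:
  assumes "serstnev_rns \<nu> \<tau>" and "a > 0" and "x \<ge> 0"
  shows "\<nu> (a *\<^sub>R p) (a * x) = \<nu> p x"
proof -
  have "\<nu> (a *\<^sub>R p) (a * x) = \<nu> p (a * x / \<bar>a\<bar>)"
    using assms unfolding serstnev_rns_def by simp
  then show ?thesis using \<open>a > 0\<close> by simp
qed

lemma serstnev_rns_min_le_convex_combination:
  fixes \<nu> :: "'a::real_vector \<Rightarrow> real \<Rightarrow> real"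
  assumes rns: "serstnev_rns \<nu> \<tau>"
    and sup_min: "\<forall>F\<in>D_plus. \<forall>G\<in>D_plus. \<forall>x\<ge>0.
           (SUP t\<in>{0..1}. min (F (t * x)) (G ((1 - t) * x))) \<le> \<tau> F G x"
    and u: "0 \<le> u" and v: "0 \<le> v" and uv: "u + v = 1" and x: "0 \<le> x"
  shows "min (\<nu> p x) (\<nu> q x) \<le> \<nu> (u *\<^sub>R p + v *\<^sub>R q) x"
proof (cases "u = 0 \<or> v = 0")
  case True
  then show ?thesis using uv by auto
next
  case False
  with u v have "u > 0" "v > 0" by auto
  have \<nu>_D_plus: "\<nu> r \<in> D_plus" for r
    using rns unfolding serstnev_rns_def by blast
  have "1 - u = v" using uv by simp
  have "bdd_above ((\<lambda>t. min (\<nu> (u *\<^sub>R p) (t * x)) (\<nu> (v *\<^sub>R q) ((1 - t) * x))) ` {0..1})"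
    using \<nu>_D_plus by (intro bdd_aboveI[where M=1]) (auto simp: D_plus_def delta_plus_def min_le_iff_disj)
  then have "min (\<nu> (u *\<^sub>R p) (u * x)) (\<nu> (v *\<^sub>R q) ((1 - u) * x))
      \<le> (SUP t\<in>{0..1}. min (\<nu> (u *\<^sub>R p) (t * x)) (\<nu> (v *\<^sub>R q) ((1 - t) * x)))"
    by (rule cSUP_upper[rotated]) (use u v uv in auto)
  also have "\<dots> \<le> \<tau> (\<nu> (u *\<^sub>R p)) (\<nu> (v *\<^sub>R q)) x"
    using sup_min \<nu>_D_plus x by blast
  also have "\<dots> \<le> \<nu> (u *\<^sub>R p + v *\<^sub>R q) x"
    using rns unfolding serstnev_rns_def le_fun_def by blast
  finally show ?thesis
    using serstnev_rns_scale_pos[OF rns \<open>u > 0\<close> x, of p]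
      serstnev_rns_scale_pos[OF rns \<open>v > 0\<close> x, of q]
    by (simp add: \<open>1 - u = v\<close>)
qed

lemma convex_serstnev_superlevel:
  fixes \<nu> :: "'a::real_vector \<Rightarrow> real \<Rightarrow> real"
  assumes "serstnev_rns \<nu> \<tau>"
    and "\<forall>F\<in>D_plus. \<forall>G\<in>D_plus. \<forall>x\<ge>0.
           (SUP t\<in>{0..1}. min (F (t * x)) (G ((1 - t) * x))) \<le> \<tau> F G x"
    and "0 \<le> x"
  shows "convex {p. c < \<nu> p x}"
proof (rule convexI)
  fix p q :: 'a and u v :: real
  assume "p \<in> {p. c < \<nu> p x}" "q \<in> {p. c < \<nu> p x}" "0 \<le> u" "0 \<le> v" "u + v = 1"
  then show "u *\<^sub>R p + v *\<^sub>R q \<in> {p. c < \<nu> p x}"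
    using serstnev_rns_min_le_convex_combination[OF assms(1,2), of u v x p q] assms(3)
    by simp
qed

theorem mainTheorem7:
  fixes \<nu> :: "'a::real_vector \<Rightarrow> real \<Rightarrow> real"
    and \<tau> :: "(real \<Rightarrow> real) \<Rightarrow> (real \<Rightarrow> real) \<Rightarrow> (real \<Rightarrow> real)"
    and A :: "'a set" and \<epsilon> :: real
  assumes "serstnev_rns \<nu> \<tau>"
    and "\<forall>F\<in>D_plus. \<forall>G\<in>D_plus. \<forall>x\<ge>0.
           (SUP t\<in>{0..1}. min (F (t * x)) (G ((1 - t) * x))) \<le> \<tau> F G x"
    and "convex A"
    and "\<epsilon> > 0"
  shows "convex {q. \<exists>p\<in>A. \<nu> (p - q) \<epsilon> > 1 - \<epsilon>}"
proof -
  let ?B = "{r. 1 - \<epsilon> < \<nu> r \<epsilon>}"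
  have "{q. \<exists>p\<in>A. \<nu> (p - q) \<epsilon> > 1 - \<epsilon>} = (\<Union>p\<in>A. \<Union>r\<in>?B. {p - r})"
  proof (intro set_eqI iffI)
    fix q assume "q \<in> {q. \<exists>p\<in>A. \<nu> (p - q) \<epsilon> > 1 - \<epsilon>}"
    then obtain p where "p \<in> A" "p - q \<in> ?B" by auto
    then show "q \<in> (\<Union>p\<in>A. \<Union>r\<in>?B. {p - r})" by force
  next
    fix q assume "q \<in> (\<Union>p\<in>A. \<Union>r\<in>?B. {p - r})"
    then obtain p r where "p \<in> A" "r \<in> ?B" "q = p - r" by blast
    then show "q \<in> {q. \<exists>p\<in>A. \<nu> (p - q) \<epsilon> > 1 - \<epsilon>}" by (auto intro!: bexI[of _ p])
  qed
  moreover have "convex ?B"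
    using convex_serstnev_superlevel[OF assms(1,2)] \<open>\<epsilon> > 0\<close> by simp
  ultimately show ?thesis
    using convex_differences[OF \<open>convex A\<close>] by simp
qed

end
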